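(* Let $b\in L^1_{\mathrm{loc}}(\mathbb{R}^n)$. Suppose there is a constant $C_b$ such that every $h^1$ atom $a$ satisfies $$\Big|\int ab\Big|\le\min\Big\{C_b,\ \frac{C_b\log 2}{\log(1+r^{-1})}\Big\},$$ where $r$ is the radius of the ball containing the support of $a$. Then $b\in\mathrm{lmo}(\mathbb{R}^n)$, with $\|b\|_{\mathrm{lmo}}\lesssim C_b$.
   Context: An $h^1$ atom: a function $a$ supported in a ball $B(x_0,r)$ with $\|a\|_{L^2}\le|B(x_0,r)|^{-1/2}$ and $|\int a|\le[\log(1+r^{-1})]^{-1}$. For a ball $B$, $b_B=\frac1{|B|}\int_Bb$. $\mathrm{LMO}_{\mathrm{loc}}$: $b\in L^1_{\mathrm{loc}}$ with $\|b\|_{\mathrm{LMO}_{\mathrm{loc}}}:=\sup_{r(B)<1}\frac{\log(1+r(B)^{-1})}{|B|}\int_B|b-b_B|<\infty$. $\mathrm{lmo}(\mathbb{R}^n)$ is the set of $b$ with $\|b\|_{\mathrm{lmo}}:=\|b\|_{\mathrm{LMO}_{\mathrm{loc}}}+\sup_{r(B)\ge1}\frac1{|B|}\int_B|b|<\infty$ (this equals $\mathrm{LMO}_{\mathrm{loc}}\cap\mathrm{bmo}$). *)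

theory Defs
  imports "HOL-Analysis.Analysis"
begin

definition locally_integrable :: "('a::euclidean_space \<Rightarrow> real) \<Rightarrow> bool" where
  "locally_integrable b \<longleftrightarrow> (\<forall>K. compact K \<longrightarrow> set_integrable lebesgue K b)"

definition avg :: "('a::euclidean_space \<Rightarrow> real) \<Rightarrow> 'a set \<Rightarrow> real" where
  "avg b B = (LINT y:B|lebesgue. b y) / measure lebesgue B"

definition h1_atom :: "('a::euclidean_space \<Rightarrow> real) \<Rightarrow> 'a \<Rightarrow> real \<Rightarrow> bool" where
  "h1_atom a x0 r \<longleftrightarrow> 0 < r \<and> a \<in> borel_measurable lebesgue
     \<and> (\<forall>y. y \<notin> ball x0 r \<longrightarrow> a y = 0)
     \<and> integrable lebesgue (\<lambda>y. (a y)\<^sup>2)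
     \<and> sqrt (LINT y|lebesgue. (a y)\<^sup>2) \<le> measure lebesgue (ball x0 r) powr (-1/2)
     \<and> \<bar>LINT y|lebesgue. a y\<bar> \<le> 1 / ln (1 + 1 / r)"

definition LMO_loc_norm :: "('a::euclidean_space \<Rightarrow> real) \<Rightarrow> ereal" where
  "LMO_loc_norm b = (SUP xr \<in> {(x, r). 0 < r \<and> r < (1::real)}.
      ereal (ln (1 + 1 / snd xr) / measure lebesgue (ball (fst xr) (snd xr))
        * (LINT y:ball (fst xr) (snd xr)|lebesgue. \<bar>b y - avg b (ball (fst xr) (snd xr))\<bar>)))"

definition lmo_norm :: "('a::euclidean_space \<Rightarrow> real) \<Rightarrow> ereal" where
  "lmo_norm b = LMO_loc_norm b + (SUP xr \<in> {(x, r). (1::real) \<le> r}.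
      ereal ((LINT y:ball (fst xr) (snd xr)|lebesgue. \<bar>b y\<bar>) / measure lebesgue (ball (fst xr) (snd xr))))"

definition in_lmo :: "('a::euclidean_space \<Rightarrow> real) \<Rightarrow> bool" where
  "in_lmo b \<longleftrightarrow> locally_integrable b \<and> lmo_norm b < \<infinity>"

end

theory Submission
  imports Defs
begin

text \<open>The hypothesis is tested on atoms of the form \<open>\<phi> \<cdot> 1\<^sub>B / |B|\<close> with \<open>|\<phi>| \<le> 1\<close>.
  On a ball of radius \<open>r \<ge> 1\<close> the choice \<open>\<phi> = sgn b\<close> is admissible, since then
  \<open>1 \<le> 1 / log (1 + 1/r)\<close>, and its pairing with \<open>b\<close> is the average of \<open>|b|\<close> over \<open>B\<close>.
  On an arbitrary ball, with \<open>c\<close> the average of \<open>b\<close>, the choice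
  \<open>\<phi> = (sgn (b - c) - m) / 2\<close>, \<open>m\<close> the average of \<open>sgn (b - c)\<close>, has mean zero, and
  its pairing with \<open>b\<close> is half the mean oscillation of \<open>b\<close> on \<open>B\<close>; the logarithmic
  bound on atoms of radius \<open>r\<close> thus controls the \<open>LMO\<^sub>l\<^sub>o\<^sub>c\<close> quantity.\<close>

lemma measure_ball_pos: "0 < r \<Longrightarrow> 0 < measure lebesgue (ball (x::'a::euclidean_space) r)"
  using content_ball_pos[of r x] by simp

lemma set_integrable_bounded:
  fixes f :: "'a \<Rightarrow> real"
  assumes "A \<in> sets M" "emeasure M A < \<infinity>" "f \<in> borel_measurable M"
    and "\<And>y. y \<in> A \<Longrightarrow> \<bar>f y\<bar> \<le> K"
  shows "set_integrable M A f"
proof (rule set_integrable_bound)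
  show "set_integrable M A (\<lambda>_. K)"
    using assms(1,2) by (simp add: set_integrable_def)
  show "set_borel_measurable M A f"
    using assms(1,3) by (simp add: set_borel_measurable_def)
  show "AE y in M. y \<in> A \<longrightarrow> norm (f y) \<le> norm K"
    using assms(4) by fastforce
qed

lemma set_integrable_bounded_mult:
  fixes f b :: "'a \<Rightarrow> real"
  assumes b: "set_integrable M A b" and f: "f \<in> borel_measurable M"
    and bound: "\<And>y. y \<in> A \<Longrightarrow> \<bar>f y\<bar> \<le> K"
  shows "set_integrable M A (\<lambda>y. f y * b y)"
proof (rule set_integrable_bound)
  show "set_integrable M A (\<lambda>y. K * b y)"
    using b by simp
  have "(\<lambda>y. indicator A y * b y) \<in> borel_measurable M"
    using b by (simp add: set_integrable_def borel_measurable_integrable)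
  then show "set_borel_measurable M A (\<lambda>y. f y * b y)"
    using f by (simp add: set_borel_measurable_def mult.left_commute)
  show "AE y in M. y \<in> A \<longrightarrow> norm (f y * b y) \<le> norm (K * b y)"
    using bound
    by (intro AE_I2) (auto simp: abs_mult intro!: mult_right_mono order_trans[OF _ abs_ge_self[of K]])
qed

lemma abs_set_integral_le_measure:
  fixes f :: "'a \<Rightarrow> real"
  assumes "A \<in> sets M" "emeasure M A < \<infinity>" "f \<in> borel_measurable M"
    and "\<And>y. y \<in> A \<Longrightarrow> \<bar>f y\<bar> \<le> K"
  shows "\<bar>LINT y:A|M. f y\<bar> \<le> K * measure M A"
proof -
  have "\<bar>LINT y:A|M. f y\<bar> \<le> (LINT y:A|M. \<bar>f y\<bar>)"
    using set_integral_norm_bound[OF set_integrable_bounded[OF assms]] by simp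
  also have "\<dots> \<le> (LINT y:A|M. K)"
    using assms by (intro set_integral_mono set_integrable_abs set_integrable_bounded) auto
  also have "\<dots> = K * measure M A"
    using assms(1,2) by (simp add: set_integral_const)
  finally show ?thesis .
qed

lemma set_integral_sub_avg:
  fixes g :: "'a::euclidean_space \<Rightarrow> real"
  assumes "set_integrable lebesgue B g" "B \<in> lmeasurable" "0 < measure lebesgue B"
  shows "(LINT y:B|lebesgue. g y - avg g B) = 0"
proof -
  have "set_integrable lebesgue B (\<lambda>_. avg g B)"
    using assms(2) by (simp add: set_integrable_def lmeasurable_iff_integrable)
  moreover have "(LINT y:B|lebesgue. avg g B) = measure lebesgue B * avg g B"
    using assms(2) by (subst set_integral_const) (auto simp: fmeasurable_def)
  ultimately show ?thesis
    using assms by (simp add: set_integral_diff avg_def)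
qed

lemma locally_integrable_set_integrable:
  assumes "locally_integrable b" "S \<in> sets lebesgue" "bounded S"
  shows "set_integrable lebesgue S b"
proof (rule set_integrable_subset)
  show "set_integrable lebesgue (closure S) b"
    using assms(1,3) compact_closure unfolding locally_integrable_def by blast
qed (use assms(2) closure_subset in auto)

lemma locally_integrable_borel_measurable:
  fixes b :: "'a::euclidean_space \<Rightarrow> real"
  assumes "locally_integrable b"
  shows "b \<in> borel_measurable lebesgue"
proof (rule borel_measurable_LIMSEQ_real)
  fix n :: nat
  show "(\<lambda>y. indicator (ball 0 (real n)) y * b y) \<in> borel_measurable lebesgue"
    using locally_integrable_set_integrable[OF assms, of "ball 0 (real n)"]
    by (simp add: set_integrable_def borel_measurable_integrable)
next
  fix y :: 'a
  have "eventually (\<lambda>n. indicator (ball 0 (real n)) y * b y = b y) sequentially"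
    using eventually_gt_at_top[of "nat \<lceil>norm y\<rceil>"]
    by eventually_elim (auto simp: indicator_def dist_norm, linarith)
  then show "(\<lambda>n. indicator (ball 0 (real n)) y * b y) \<longlonglongrightarrow> b y"
    by (rule tendsto_eventually)
qed

lemma h1_atom_normalized_indicator:
  fixes \<phi> :: "'a::euclidean_space \<Rightarrow> real" and x :: 'a and r :: real
  defines "B \<equiv> ball x r"
  assumes r: "0 < r" and \<phi>: "\<phi> \<in> borel_measurable lebesgue"
    and bound: "\<And>y. y \<in> B \<Longrightarrow> \<bar>\<phi> y\<bar> \<le> 1"
    and mean: "\<bar>LINT y:B|lebesgue. \<phi> y\<bar> \<le> measure lebesgue B / ln (1 + 1 / r)"
  shows "h1_atom (\<lambda>y. indicator B y * \<phi> y / measure lebesgue B) x r"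
proof -
  define m where "m = measure lebesgue B"
  have m: "0 < m"
    unfolding m_def B_def using measure_ball_pos[OF r] .
  have B: "B \<in> sets lebesgue" "emeasure lebesgue B < \<infinity>"
    unfolding B_def using lmeasurable_ball by (auto simp: fmeasurable_def)
  have square: "(indicator B y * \<phi> y / m)\<^sup>2 = indicator B y * (\<phi> y / m)\<^sup>2" for y
    by (simp add: indicator_def power_divide)
  have square_bound: "\<bar>(\<phi> y / m)\<^sup>2\<bar> \<le> 1 / m\<^sup>2" if "y \<in> B" for y
    using bound[OF that] m by (simp add: power_divide divide_right_mono abs_square_le_1)
  have "set_integrable lebesgue B (\<lambda>y. (\<phi> y / m)\<^sup>2)"
    using B \<phi> square_bound by (intro set_integrable_bounded) auto
  then have square_integrable: "integrable lebesgue (\<lambda>y. (indicator B y * \<phi> y / m)\<^sup>2)"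
    unfolding square by (simp add: set_integrable_def)
  have "(LINT y|lebesgue. (indicator B y * \<phi> y / m)\<^sup>2) = (LINT y:B|lebesgue. (\<phi> y / m)\<^sup>2)"
    unfolding square by (simp add: set_lebesgue_integral_def)
  also have "\<dots> \<le> \<bar>LINT y:B|lebesgue. (\<phi> y / m)\<^sup>2\<bar>"
    by (rule abs_ge_self)
  also have "\<dots> \<le> 1 / m\<^sup>2 * measure lebesgue B"
    by (rule abs_set_integral_le_measure[OF B _ square_bound]) (use \<phi> in simp)
  also have "\<dots> = 1 / m"
    by (simp add: m_def power2_eq_square)
  finally have "sqrt (LINT y|lebesgue. (indicator B y * \<phi> y / m)\<^sup>2) \<le> sqrt (1 / m)"
    by simp
  also have "sqrt (1 / m) = m powr (-1/2)"
    using m by (simp add: powr_minus_divide powr_half_sqrt real_sqrt_divide)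
  finally have L2: "sqrt (LINT y|lebesgue. (indicator B y * \<phi> y / m)\<^sup>2) \<le> m powr (-1/2)" .
  have "\<bar>LINT y|lebesgue. indicator B y * \<phi> y / m\<bar> = \<bar>LINT y:B|lebesgue. \<phi> y\<bar> / m"
    using m by (simp add: set_lebesgue_integral_def abs_divide)
  also have "\<dots> \<le> 1 / ln (1 + 1 / r)"
    using mean m by (simp add: m_def divide_le_eq)
  finally have "\<bar>LINT y|lebesgue. indicator B y * \<phi> y / m\<bar> \<le> 1 / ln (1 + 1 / r)" .
  moreover have "(\<lambda>y. indicator B y * \<phi> y / m) \<in> borel_measurable lebesgue"
    using \<phi> B(1) by measurable
  ultimately show ?thesis
    using r square_integrable L2 unfolding h1_atom_def m_def B_def
    by (auto simp: indicator_def)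
qed

definition atom_pairing_bounded :: "('a::euclidean_space \<Rightarrow> real) \<Rightarrow> real \<Rightarrow> bool" where
  "atom_pairing_bounded b Cb \<longleftrightarrow>
     (\<forall>a x0 r. h1_atom a x0 r \<longrightarrow> integrable lebesgue (\<lambda>y. a y * b y) \<longrightarrow>
        \<bar>LINT y|lebesgue. a y * b y\<bar> \<le> min Cb (Cb * ln 2 / ln (1 + 1 / r)))"

lemma atom_pairing_bounded_ball:
  fixes b \<phi> :: "'a::euclidean_space \<Rightarrow> real" and x :: 'a and r :: real
  defines "B \<equiv> ball x r"
  assumes pairing: "atom_pairing_bounded b Cb" and b: "locally_integrable b"
    and r: "0 < r" and \<phi>: "\<phi> \<in> borel_measurable lebesgue"
    and bound: "\<And>y. y \<in> B \<Longrightarrow> \<bar>\<phi> y\<bar> \<le> 1"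
    and mean: "\<bar>LINT y:B|lebesgue. \<phi> y\<bar> \<le> measure lebesgue B / ln (1 + 1 / r)"
  shows "\<bar>LINT y:B|lebesgue. \<phi> y * b y\<bar>
           \<le> measure lebesgue B * min Cb (Cb * ln 2 / ln (1 + 1 / r))"
proof -
  define m where "m = measure lebesgue B"
  have m: "0 < m"
    unfolding m_def B_def using measure_ball_pos[OF r] .
  define a where "a y = indicator B y * \<phi> y / m" for y
  have atom: "h1_atom a x r"
    using h1_atom_normalized_indicator[OF r \<phi> bound[unfolded B_def] mean[unfolded B_def]]
    unfolding a_def m_def B_def .
  have "set_integrable lebesgue B (\<lambda>y. \<phi> y * b y)"
    using bound unfolding B_def
    by (intro set_integrable_bounded_mult locally_integrable_set_integrable b \<phi>) auto
  moreover have ab: "a y * b y = indicator B y * (\<phi> y * b y) / m" for y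
    by (simp add: a_def)
  ultimately have "integrable lebesgue (\<lambda>y. a y * b y)"
    by (simp add: set_integrable_def)
  then have "\<bar>LINT y|lebesgue. a y * b y\<bar> \<le> min Cb (Cb * ln 2 / ln (1 + 1 / r))"
    using pairing atom unfolding atom_pairing_bounded_def by blast
  moreover have "(LINT y|lebesgue. a y * b y) = (LINT y:B|lebesgue. \<phi> y * b y) / m"
    unfolding ab by (simp add: set_lebesgue_integral_def)
  ultimately have "\<bar>LINT y:B|lebesgue. \<phi> y * b y\<bar> / m \<le> min Cb (Cb * ln 2 / ln (1 + 1 / r))"
    using m by (simp add: abs_divide)
  then show ?thesis
    using m unfolding m_def by (simp only: pos_divide_le_eq mult.commute)
qed

lemma ball_average_abs_le:
  fixes b :: "'a::euclidean_space \<Rightarrow> real"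
  assumes pairing: "atom_pairing_bounded b Cb" and b: "locally_integrable b" and r: "1 \<le> r"
  shows "(LINT y:ball x r|lebesgue. \<bar>b y\<bar>) / measure lebesgue (ball x r) \<le> Cb"
proof -
  define m where "m = measure lebesgue (ball x r)"
  have m: "0 < m"
    unfolding m_def using measure_ball_pos r by simp
  have "ln (1 + 1 / r) \<le> ln 2"
    using r by (subst ln_le_cancel_iff) (auto simp: add_pos_nonneg)
  then have log_le_1: "ln (1 + 1 / r) \<le> 1"
    using ln_2_less_1 by linarith
  have log_pos: "0 < ln (1 + 1 / r)"
    using r by (intro ln_gt_zero) auto
  have sgn_b: "(\<lambda>y. sgn (b y)) \<in> borel_measurable lebesgue"
    using locally_integrable_borel_measurable[OF b] by measurable
  have "\<bar>LINT y:ball x r|lebesgue. sgn (b y)\<bar> \<le> 1 * m"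
    unfolding m_def using lmeasurable_ball sgn_b
    by (intro abs_set_integral_le_measure) (auto simp: fmeasurable_def abs_sgn_eq)
  also have "\<dots> \<le> m / ln (1 + 1 / r)"
    using m log_pos log_le_1 by (simp add: le_divide_eq mult_left_le)
  finally have pairing_sgn:
    "\<bar>LINT y:ball x r|lebesgue. sgn (b y) * b y\<bar> \<le> m * min Cb (Cb * ln 2 / ln (1 + 1 / r))"
    unfolding m_def using r
    by (intro atom_pairing_bounded_ball[OF pairing b _ sgn_b]) (auto simp: abs_sgn_eq)
  have "sgn (b y) * b y = \<bar>b y\<bar>" for y
    by (simp add: sgn_real_def)
  then have "(LINT y:ball x r|lebesgue. \<bar>b y\<bar>) \<le> \<bar>LINT y:ball x r|lebesgue. sgn (b y) * b y\<bar>"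
    by simp
  also have "\<dots> \<le> m * Cb"
    using pairing_sgn m by (meson min.cobounded1 mult_left_mono less_imp_le order_trans)
  finally have "(LINT y:ball x r|lebesgue. \<bar>b y\<bar>) \<le> m * Cb" .
  then show ?thesis
    using m by (simp add: m_def pos_divide_le_eq mult.commute)
qed

lemma ball_mean_oscillation_le:
  fixes b :: "'a::euclidean_space \<Rightarrow> real"
  assumes pairing: "atom_pairing_bounded b Cb" and b: "locally_integrable b" and r: "0 < r"
  shows "ln (1 + 1 / r) / measure lebesgue (ball x r)
           * (LINT y:ball x r|lebesgue. \<bar>b y - avg b (ball x r)\<bar>) \<le> 2 * ln 2 * Cb"
proof -
  define B where "B = ball x r"
  define m where "m = measure lebesgue B"
  have m: "0 < m"
    unfolding m_def B_def using measure_ball_pos[OF r] .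
  have B: "B \<in> lmeasurable"
    unfolding B_def by simp
  then have B_sets: "B \<in> sets lebesgue" "emeasure lebesgue B < \<infinity>"
    by (auto simp: fmeasurable_def)
  have log_pos: "0 < ln (1 + 1 / r)"
    using r by (intro ln_gt_zero) auto
  define c where "c = avg b B"
  define s where "s y = sgn (b y - c)" for y
  define s_avg where "s_avg = avg s B"
  have s_meas: "s \<in> borel_measurable lebesgue"
    unfolding s_def using locally_integrable_borel_measurable[OF b] by measurable
  have s_bound: "\<bar>s y\<bar> \<le> 1" for y
    by (simp add: s_def abs_sgn_eq)
  have int_const: "set_integrable lebesgue B (\<lambda>_. k)" for k :: real
    using B by (simp add: set_integrable_def lmeasurable_iff_integrable)
  have int_b: "set_integrable lebesgue B b"
    unfolding B_def using b by (intro locally_integrable_set_integrable) auto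
  have int_s: "set_integrable lebesgue B s"
    using B_sets s_meas s_bound by (rule set_integrable_bounded)
  have "\<bar>LINT y:B|lebesgue. s y\<bar> \<le> 1 * m"
    unfolding m_def using B_sets s_meas s_bound by (rule abs_set_integral_le_measure)
  then have s_avg_bound: "\<bar>s_avg\<bar> \<le> 1"
    using m by (simp add: s_avg_def avg_def abs_divide m_def)
  define \<phi> where "\<phi> y = (s y - s_avg) / 2" for y
  have \<phi>_meas: "\<phi> \<in> borel_measurable lebesgue"
    unfolding \<phi>_def using s_meas by measurable
  have \<phi>_bound: "\<bar>\<phi> y\<bar> \<le> 1" for y
    using s_bound[of y] s_avg_bound by (simp add: \<phi>_def)
  have \<phi>_mean: "(LINT y:B|lebesgue. \<phi> y) = 0"
    using set_integral_sub_avg[OF int_s B] m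
    by (simp add: \<phi>_def s_avg_def m_def)
  have "(s y - s_avg) * b y = \<bar>b y - c\<bar> - s_avg * (b y - c) + c * (s y - s_avg)" for y
    by (simp add: s_def sgn_real_def algebra_simps)
  then have "(LINT y:B|lebesgue. (s y - s_avg) * b y)
      = (LINT y:B|lebesgue. \<bar>b y - c\<bar>) - s_avg * (LINT y:B|lebesgue. b y - c)
        + c * (LINT y:B|lebesgue. s y - s_avg)"
    using int_b int_s int_const by (simp add: set_integrable_abs)
  also have "\<dots> = (LINT y:B|lebesgue. \<bar>b y - c\<bar>)"
    using set_integral_sub_avg[OF int_b B] set_integral_sub_avg[OF int_s B] m
    by (simp add: c_def s_avg_def m_def)
  finally have \<phi>_pairing: "(LINT y:B|lebesgue. \<phi> y * b y) = (LINT y:B|lebesgue. \<bar>b y - c\<bar>) / 2"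
    by (simp add: \<phi>_def)
  have "\<bar>LINT y:B|lebesgue. \<phi> y * b y\<bar> \<le> m * min Cb (Cb * ln 2 / ln (1 + 1 / r))"
    unfolding m_def B_def using \<phi>_bound \<phi>_mean m log_pos
    by (intro atom_pairing_bounded_ball[OF pairing b r \<phi>_meas]) (auto simp: B_def)
  then have "(LINT y:B|lebesgue. \<bar>b y - c\<bar>) / 2 \<le> m * (Cb * ln 2 / ln (1 + 1 / r))"
    unfolding \<phi>_pairing using m
    by (meson abs_ge_self min.cobounded2 mult_left_mono less_imp_le order_trans)
  then show ?thesis
    using m log_pos by (simp add: B_def c_def m_def field_simps)
qed

lemma LMO_loc_norm_le:
  assumes "atom_pairing_bounded b Cb" "locally_integrable b"
  shows "LMO_loc_norm b \<le> ereal (2 * ln 2 * Cb)"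
  unfolding LMO_loc_norm_def using ball_mean_oscillation_le[OF assms]
  by (auto intro!: SUP_least)

lemma lmo_norm_le:
  fixes b :: "'a::euclidean_space \<Rightarrow> real"
  assumes pairing: "atom_pairing_bounded b Cb" and b: "locally_integrable b"
  shows "lmo_norm b \<le> ereal (3 * Cb)"
proof -
  have "0 \<le> (LINT y:ball (0::'a) 1|lebesgue. \<bar>b y\<bar>) / measure lebesgue (ball (0::'a) 1)"
    by (simp add: set_lebesgue_integral_def)
  then have Cb: "0 \<le> Cb"
    using ball_average_abs_le[OF pairing b, of 1 0] by linarith
  have "(SUP xr \<in> {(x, r). (1::real) \<le> r}. ereal ((LINT y:ball (fst xr) (snd xr)|lebesgue. \<bar>b y\<bar>)
          / measure lebesgue (ball (fst xr) (snd xr)))) \<le> ereal Cb"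
    using ball_average_abs_le[OF pairing b] by (auto intro!: SUP_least)
  then have "lmo_norm b \<le> ereal (2 * ln 2 * Cb) + ereal Cb"
    unfolding lmo_norm_def by (intro add_mono LMO_loc_norm_le[OF pairing b])
  also have "\<dots> \<le> ereal (3 * Cb)"
    using Cb ln_2_less_1 by (simp add: mult_right_mono)
  finally show ?thesis .
qed

theorem mainTheorem10:
  "\<exists>C::real. 0 < C \<and>
     (\<forall>(b::'a::euclidean_space \<Rightarrow> real) (Cb::real).
        locally_integrable b \<longrightarrow>
        (\<forall>a x0 r. h1_atom a x0 r \<longrightarrow> integrable lebesgue (\<lambda>y. a y * b y) \<longrightarrow>
            \<bar>LINT y|lebesgue. a y * b y\<bar> \<le> min Cb (Cb * ln 2 / ln (1 + 1 / r))) \<longrightarrow>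
        in_lmo b \<and> lmo_norm b \<le> ereal (C * Cb))"
proof (intro exI[of _ 3] conjI allI impI)
  fix b :: "'a \<Rightarrow> real" and Cb :: real
  assume b: "locally_integrable b"
    and atom_bound: "\<forall>a x0 r. h1_atom a x0 r \<longrightarrow> integrable lebesgue (\<lambda>y. a y * b y) \<longrightarrow>
           \<bar>LINT y|lebesgue. a y * b y\<bar> \<le> min Cb (Cb * ln 2 / ln (1 + 1 / r))"
  from atom_bound have pairing: "atom_pairing_bounded b Cb"
    unfolding atom_pairing_bounded_def .
  show "lmo_norm b \<le> ereal (3 * Cb)"
    using lmo_norm_le[OF pairing b] .
  then show "in_lmo b"
    using b by (auto simp: in_lmo_def intro: le_less_trans)
qed simp

end
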